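(* Let $\mathfrak g=\mathfrak k\oplus\mathfrak m$ be a Pauli-spanned Cartan decomposition of a Lie algebra $\mathfrak g\subseteq\mathfrak{su}(2^n)$, and let $\mathfrak b=\mathrm{span}_{i\mathbb R}\{\tilde b_1,\dots,\tilde b_d\}\subseteq\mathfrak m$ be an Abelian subalgebra spanned by $i$ times pairwise commuting Pauli strings $\tilde b_1,\dots,\tilde b_d\in\tilde{\mathfrak m}$, all belonging to the same connected component of the frustration graph of $\mathfrak g$. Then the $\tilde b_j$ can be ordered so that $$|\tilde{\mathfrak k}^1(\mathfrak b)|>|\tilde{\mathfrak k}^2_1(\mathfrak b)|\ge|\tilde{\mathfrak k}^3_{12}(\mathfrak b)|\ge\cdots\ge|\tilde{\mathfrak k}^d_{1\dots d-1}(\mathfrak b)|,$$ where equality occurs only between empty sets (so the non-empty sets form a strictly decreasing initial segment and all empty sets come at the end). Moreover, if the first $r$ sets are non-empty, the same inequalities hold for any permutation of the first $r$ indices; a general permutation of the indices may cause empty sets to appear earlier in the sequence but does not change the sizes or order of the non-empty sets.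
   Context: Pauli strings on $n$ qubits are tensor products of $I,X,Y,Z$, not all identity; two Pauli strings either commute or anticommute. A Pauli-spanned Cartan decomposition is $\mathfrak g=\mathfrak k\oplus\mathfrak m$ with $\mathfrak k=\mathrm{span}_{i\mathbb R}\tilde{\mathfrak k}$, $\mathfrak m=\mathrm{span}_{i\mathbb R}\tilde{\mathfrak m}$, $\mathfrak g=\mathrm{span}_{i\mathbb R}\tilde{\mathfrak g}$, $\tilde{\mathfrak g}=\tilde{\mathfrak k}\sqcup\tilde{\mathfrak m}$ sets of Pauli strings, and $[\mathfrak k,\mathfrak k]\subseteq\mathfrak k$, $[\mathfrak m,\mathfrak m]\subseteq\mathfrak k$, $[\mathfrak k,\mathfrak m]\subseteq\mathfrak m$. The frustration graph of $\mathfrak g$ has vertex set $\tilde{\mathfrak g}$ and an edge between $\sigma,\tau$ iff $[\sigma,\tau]\ne0$. For disjoint index lists, $\tilde{\mathfrak k}^{i_1i_2\dots}_{j_1j_2\dots}(\mathfrak b)$ is the set of $\tilde k\in\tilde{\mathfrak k}$ that anticommute with every $\tilde b_{i_p}$ and commute with every $\tilde b_{j_q}$ (no condition for other indices); $\tilde{\mathfrak k}^r_{1\dots r-1}$ thus consists of elements commuting with $\tilde b_1,\dots,\tilde b_{r-1}$ and anticommuting with $\tilde b_r$. *)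

theory Defs
  imports Main "HOL-Library.Multiset"
begin

text \<open>Single-qubit Pauli operators (I, X, Y, Z); phases are ignored.\<close>
datatype pauli = PI | PX | PY | PZ

text \<open>Product of single-qubit Paulis up to a phase (Klein four-group).\<close>
fun pmul :: "pauli \<Rightarrow> pauli \<Rightarrow> pauli" where
  "pmul PI q = q"
| "pmul p PI = p"
| "pmul PX PX = PI" | "pmul PY PY = PI" | "pmul PZ PZ = PI"
| "pmul PX PY = PZ" | "pmul PY PX = PZ"
| "pmul PY PZ = PX" | "pmul PZ PY = PX"
| "pmul PZ PX = PY" | "pmul PX PZ = PY"

definition pauli_strings :: "nat \<Rightarrow> pauli list set" where
  "pauli_strings n = {s. length s = n \<and> (\<exists>c\<in>set s. c \<noteq> PI)}"

definition anticommute :: "pauli list \<Rightarrow> pauli list \<Rightarrow> bool" where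
  "anticommute s t =
     odd (card {i. i < length s \<and> i < length t \<and> s!i \<noteq> PI \<and> t!i \<noteq> PI \<and> s!i \<noteq> t!i})"

abbreviation commute :: "pauli list \<Rightarrow> pauli list \<Rightarrow> bool" where
  "commute s t \<equiv> \<not> anticommute s t"

text \<open>Product of Pauli strings up to phase. For anticommuting s, t the commutator
  [s,t] = 2 s t is a nonzero multiple of this Pauli string.\<close>
definition smul :: "pauli list \<Rightarrow> pauli list \<Rightarrow> pauli list" where
  "smul s t = map2 pmul s t"

text \<open>Pauli-spanned Cartan decomposition g = k + m with k = span_iR K, m = span_iR M.
  By linear independence of Pauli strings, the bracket conditions on the spans are
  equivalent to the following closure conditions on the generating sets
  (commuting strings have zero bracket).\<close>
definition pauli_cartan :: "nat \<Rightarrow> pauli list set \<Rightarrow> pauli list set \<Rightarrow> bool" where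
  "pauli_cartan n K M \<longleftrightarrow>
     K \<subseteq> pauli_strings n \<and> M \<subseteq> pauli_strings n \<and> K \<inter> M = {} \<and>
     (\<forall>a\<in>K. \<forall>b\<in>K. anticommute a b \<longrightarrow> smul a b \<in> K) \<and>
     (\<forall>a\<in>M. \<forall>b\<in>M. anticommute a b \<longrightarrow> smul a b \<in> K) \<and>
     (\<forall>a\<in>K. \<forall>b\<in>M. anticommute a b \<longrightarrow> smul a b \<in> M)"

definition frustration_edge :: "pauli list set \<Rightarrow> pauli list \<Rightarrow> pauli list \<Rightarrow> bool" where
  "frustration_edge G s t \<longleftrightarrow> s \<in> G \<and> t \<in> G \<and> anticommute s t"

definition same_component :: "pauli list set \<Rightarrow> pauli list \<Rightarrow> pauli list \<Rightarrow> bool" where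
  "same_component G s t \<longleftrightarrow> s \<in> G \<and> t \<in> G \<and> (frustration_edge G)\<^sup>*\<^sup>* s t"

text \<open>For an ordering bs = [b_1,...,b_d] (0-based indices here), the set
  k^{r}_{1...r-1}(b): elements of K anticommuting with b_r and commuting with
  b_1,...,b_{r-1}.\<close>
definition kset :: "pauli list set \<Rightarrow> pauli list list \<Rightarrow> nat \<Rightarrow> pauli list set" where
  "kset K bs r = {k \<in> K. anticommute k (bs!r) \<and> (\<forall>j<r. commute k (bs!j))}"

definition kseq :: "pauli list set \<Rightarrow> pauli list list \<Rightarrow> nat list" where
  "kseq K bs = map (\<lambda>r. card (kset K bs r)) [0..<length bs]"

definition good_chain :: "nat list \<Rightarrow> bool" where
  "good_chain xs \<longleftrightarrow>
     (2 \<le> length xs \<longrightarrow> xs!1 < xs!0) \<and>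
     (\<forall>r. Suc r < length xs \<longrightarrow> xs!(Suc r) \<le> xs!r \<and> (xs!(Suc r) = xs!r \<longrightarrow> xs!r = 0))"

end

theory Submission
  imports Defs
begin

text \<open>Write \<open>k\<^sub>T(b)\<close> for the elements of \<open>k\<close> that commute with all of \<open>T \<subseteq> B\<close> and
  anticommute with \<open>b\<close>. The key fact is that two non-empty sets \<open>k\<^sub>T(b)\<close>, \<open>k\<^sub>T(b')\<close>
  always intersect: connectivity gives a common anticommuting neighbour of \<open>b, b'\<close> in \<open>g\<close>;
  closure of \<open>g\<close> under products of anticommuting strings lets one move it into the
  centralizer of \<open>T\<close>, adding one element of \<open>T\<close> at a time; and multiplying by \<open>b\<close>
  moves it from \<open>m\<close> into \<open>k\<close>. Given a common element \<open>k\<close>, the Clifford rotations by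
  \<open>k\<close> and by \<open>k b b'\<close> permute the centralizer of \<open>T\<close> in \<open>k\<close> and carry \<open>b\<close> to \<open>b'\<close>,
  so all non-empty \<open>k\<^sub>T(b)\<close> have the same size. Adding \<open>a\<close> to \<open>T\<close> removes the
  non-empty intersection \<open>k\<^sub>T(a) \<inter> k\<^sub>T(b)\<close> from \<open>k\<^sub>T(b)\<close>, which gives the strict
  decrease along an ordering that places the elements with non-empty sets first, and
  shows that swapping two neighbours in an ordering does not change the non-zero sizes.\<close>

definition pauli_anticommute :: "pauli \<Rightarrow> pauli \<Rightarrow> bool" where
  "pauli_anticommute p q \<longleftrightarrow> p \<noteq> PI \<and> q \<noteq> PI \<and> p \<noteq> q"

lemma pauli_anticommute_pmul:
  "pauli_anticommute (pmul p q) r \<longleftrightarrow> pauli_anticommute p r \<noteq> pauli_anticommute q r"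
  by (cases p; cases q; cases r) (auto simp: pauli_anticommute_def)

lemma anticommute_iff_odd_card:
  "anticommute s t \<longleftrightarrow>
     odd (card {i. i < length s \<and> i < length t \<and> pauli_anticommute (s!i) (t!i)})"
  unfolding anticommute_def pauli_anticommute_def by simp

lemma anticommute_sym: "anticommute s t \<longleftrightarrow> anticommute t s"
proof -
  have "{i. i < length s \<and> i < length t \<and> pauli_anticommute (s!i) (t!i)}
      = {i. i < length t \<and> i < length s \<and> pauli_anticommute (t!i) (s!i)}"
    by (auto simp: pauli_anticommute_def)
  then show ?thesis
    unfolding anticommute_iff_odd_card by simp
qed

lemma not_anticommute_self: "\<not> anticommute s s"
  by (simp add: anticommute_def)

lemma length_smul [simp]: "length (smul s t) = min (length s) (length t)"
  by (simp add: smul_def)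

lemma nth_smul [simp]: "i < length s \<Longrightarrow> i < length t \<Longrightarrow> smul s t ! i = pmul (s!i) (t!i)"
  by (simp add: smul_def)

lemma smul_commute: "smul s t = smul t s"
proof -
  have "pmul p q = pmul q p" for p q
    by (cases p; cases q) auto
  then show ?thesis
    by (intro nth_equalityI) auto
qed

lemma smul_smul_cancel:
  assumes "length s = length t"
  shows "smul (smul s t) t = s"
proof -
  have "pmul (pmul p q) q = p" for p q
    by (cases p; cases q) auto
  then show ?thesis
    using assms by (intro nth_equalityI) auto
qed

lemma odd_card_symdiff:
  assumes "finite A" "finite B"
  shows "odd (card {i. (i \<in> A) \<noteq> (i \<in> B)}) \<longleftrightarrow> odd (card A) \<noteq> odd (card B)"
proof -
  let ?D = "{i. (i \<in> A) \<noteq> (i \<in> B)}"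
  have "A \<union> B = ?D \<union> (A \<inter> B)" "?D \<inter> (A \<inter> B) = {}" "finite ?D"
    using assms by (auto intro: finite_subset[of _ "A \<union> B"])
  then have "card (A \<union> B) = card ?D + card (A \<inter> B)"
    using assms by (simp add: card_Un_disjoint)
  with card_Un_Int[OF assms] show ?thesis by presburger
qed

lemma anticommute_smul_left:
  assumes "length s = length t"
  shows "anticommute (smul s t) u \<longleftrightarrow> anticommute s u \<noteq> anticommute t u"
proof -
  let ?S = "{i. i < length s \<and> i < length u \<and> pauli_anticommute (s!i) (u!i)}"
  let ?T = "{i. i < length t \<and> i < length u \<and> pauli_anticommute (t!i) (u!i)}"
  have "{i. i < length (smul s t) \<and> i < length u \<and> pauli_anticommute (smul s t ! i) (u!i)}
      = {i. (i \<in> ?S) \<noteq> (i \<in> ?T)}"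
    using assms by (auto simp: pauli_anticommute_pmul)
  then show ?thesis
    unfolding anticommute_iff_odd_card using odd_card_symdiff[of ?S ?T] by simp
qed

lemma anticommute_smul_right:
  "length s = length t \<Longrightarrow> anticommute u (smul s t) \<longleftrightarrow> anticommute u s \<noteq> anticommute u t"
  using anticommute_smul_left anticommute_sym by metis

lemma finite_pauli_strings: "finite (pauli_strings n)"
proof -
  have "(UNIV :: pauli set) = {PI, PX, PY, PZ}"
    using pauli.exhaust by auto
  then have "finite (UNIV :: pauli set)"
    by (metis finite.emptyI finite_insert)
  then have "finite {s :: pauli list. set s \<subseteq> UNIV \<and> length s = n}"
    by (rule finite_lists_length_eq)
  then show ?thesis
    by (rule finite_subset[rotated]) (auto simp: pauli_strings_def)
qed

lemma length_if_subset_pauli_strings: "G \<subseteq> pauli_strings n \<Longrightarrow> s \<in> G \<Longrightarrow> length s = n"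
  by (auto simp: pauli_strings_def)

text \<open>Up to phase, \<open>pauli_rot h\<close> is conjugation by the Clifford rotation \<open>exp(i\<pi>h/4)\<close>.\<close>
definition pauli_rot :: "pauli list \<Rightarrow> pauli list \<Rightarrow> pauli list" where
  "pauli_rot h g = (if anticommute h g then smul h g else g)"

lemma length_pauli_rot: "length h = length g \<Longrightarrow> length (pauli_rot h g) = length g"
  by (simp add: pauli_rot_def)

lemma pauli_rot_pauli_rot:
  assumes "length h = length g"
  shows "pauli_rot h (pauli_rot h g) = g"
proof (cases "anticommute h g")
  case True
  then have "anticommute h (smul h g)"
    using assms by (simp add: anticommute_smul_right not_anticommute_self)
  moreover have "smul h (smul h g) = g"
    using assms smul_smul_cancel[of g h] by (simp add: smul_commute)
  ultimately show ?thesis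
    using True by (simp add: pauli_rot_def)
qed (simp add: pauli_rot_def)

lemma anticommute_pauli_rot:
  assumes "length h = length g" "length h = length u"
  shows "anticommute (pauli_rot h g) (pauli_rot h u) \<longleftrightarrow> anticommute g u"
  using assms
  by (auto simp: pauli_rot_def anticommute_smul_left anticommute_smul_right
      not_anticommute_self anticommute_sym[of h])

section \<open>Sets closed under products of anticommuting strings\<close>

definition smul_closed :: "pauli list set \<Rightarrow> bool" where
  "smul_closed G \<longleftrightarrow> (\<forall>a\<in>G. \<forall>b\<in>G. anticommute a b \<longrightarrow> smul a b \<in> G)"

definition centralizer :: "pauli list set \<Rightarrow> pauli list set \<Rightarrow> pauli list set" where
  "centralizer G T = {g \<in> G. \<forall>t\<in>T. commute g t}"

lemma centralizer_empty [simp]: "centralizer G {} = G"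
  by (simp add: centralizer_def)

lemma centralizer_insert: "centralizer G (insert a T) = {g \<in> centralizer G T. commute g a}"
  by (auto simp: centralizer_def)

lemma centralizer_subset: "centralizer G T \<subseteq> G"
  by (auto simp: centralizer_def)

lemma centralizer_mono: "G \<subseteq> H \<Longrightarrow> centralizer G T \<subseteq> centralizer H T"
  by (auto simp: centralizer_def)

lemma smul_closed_centralizer:
  assumes "smul_closed G" "G \<subseteq> pauli_strings n"
  shows "smul_closed (centralizer G T)"
  unfolding smul_closed_def
proof (intro ballI impI)
  fix a b assume a: "a \<in> centralizer G T" and b: "b \<in> centralizer G T" and ab: "anticommute a b"
  have "length a = length b"
    using a b assms(2) by (auto simp: centralizer_def length_if_subset_pauli_strings)
  then show "smul a b \<in> centralizer G T"
    using assms(1) a b ab by (auto simp: smul_closed_def centralizer_def anticommute_smul_left)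
qed

lemma pauli_rot_mem: "smul_closed G \<Longrightarrow> h \<in> G \<Longrightarrow> g \<in> G \<Longrightarrow> pauli_rot h g \<in> G"
  by (simp add: smul_closed_def pauli_rot_def)

text \<open>If \<open>h\<close> anticommutes with \<open>s\<close> and \<open>y\<close>, and \<open>z\<close> is a neighbour of \<open>y\<close> commuting
  with \<open>h\<close>, then \<open>h y\<close> anticommutes with \<open>s\<close> and \<open>z\<close> unless \<open>y\<close> already does with \<open>s\<close>.\<close>
lemma frustration_path_common_neighbour:
  assumes closed: "smul_closed G" and G: "G \<subseteq> pauli_strings n"
    and path: "(frustration_edge G)\<^sup>*\<^sup>* s t" and s: "s \<in> G"
  shows "s = t \<or> anticommute s t \<or> (\<exists>h\<in>G. anticommute h s \<and> anticommute h t)"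
  using path
proof (induction rule: rtranclp_induct)
  case (step y z)
  then have y: "y \<in> G" and yz: "anticommute y z"
    by (auto simp: frustration_edge_def)
  from step.IH consider (eq) "s = y" | (adj) "anticommute s y"
    | (common) h where "h \<in> G" "anticommute h s" "anticommute h y"
    by blast
  then show ?case
  proof cases
    case (common h)
    consider "anticommute h z" | "anticommute y s" | "commute h z" "commute y s"
      by blast
    then show ?thesis
    proof cases
      case 3
      have "length h = length y"
        using \<open>h \<in> G\<close> y G by (simp add: length_if_subset_pauli_strings)
      moreover have "smul h y \<in> G"
        using closed common y by (simp add: smul_closed_def)
      ultimately show ?thesis
        using common yz 3 by (intro disjI2 bexI[of _ "smul h y"]) (auto simp: anticommute_smul_left)
    qed (use common y yz in auto)
  qed (use y yz anticommute_sym[of s y] in auto)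
qed simp

text \<open>The witness is \<open>x y\<close>, or \<open>(x c) y\<close> when \<open>x\<close> and \<open>y\<close> commute.\<close>
lemma smul_closed_anticommute_sum:
  assumes closed: "smul_closed C" and C: "C \<subseteq> pauli_strings n"
    and c: "c \<in> C" and x: "x \<in> C" and y: "y \<in> C"
    and xc: "anticommute x c" and yc: "anticommute y c"
  shows "\<exists>z\<in>C. \<forall>w. commute c w \<longrightarrow> (anticommute z w \<longleftrightarrow> anticommute x w \<noteq> anticommute y w)"
proof -
  have len: "length x = length y" "length x = length c"
    using x y c C by (simp_all add: length_if_subset_pauli_strings)
  show ?thesis
  proof (cases "anticommute x y")
    case True
    then have "smul x y \<in> C"
      using closed x y by (simp add: smul_closed_def)
    then show ?thesis
      using len by (intro bexI[of _ "smul x y"]) (auto simp: anticommute_smul_left)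
  next
    case False
    have "smul x c \<in> C"
      using closed x c xc by (simp add: smul_closed_def)
    moreover have "anticommute (smul x c) y"
      using False yc len by (simp add: anticommute_smul_left anticommute_sym[of c])
    ultimately have "smul (smul x c) y \<in> C"
      using closed y by (simp add: smul_closed_def)
    then show ?thesis
      using len by (intro bexI[of _ "smul (smul x c) y"]) (auto simp: anticommute_smul_left)
  qed
qed

lemma card_anticommute_le_pauli_rot:
  assumes closed: "smul_closed C" and C: "C \<subseteq> pauli_strings n" and fin: "finite C"
    and h: "h \<in> C" and h': "h' \<in> C" and b: "length b = n"
    and b': "pauli_rot h' (pauli_rot h b) = b'"
  shows "card {k \<in> C. anticommute k b} \<le> card {k \<in> C. anticommute k b'}"
proof -
  define \<phi> where "\<phi> g = pauli_rot h' (pauli_rot h g)" for g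
  have len: "length h = n" "length h' = n"
    using h h' C by (simp_all add: length_if_subset_pauli_strings)
  have len_rot: "length (pauli_rot h g) = n" if "length g = n" for g
    using that len by (simp add: length_pauli_rot)
  have anti_\<phi>: "anticommute (\<phi> g) (\<phi> u) \<longleftrightarrow> anticommute g u" if "length g = n" "length u = n" for g u
    using that len len_rot by (simp add: \<phi>_def anticommute_pauli_rot)
  have "inj_on \<phi> C"
  proof (rule inj_onI)
    fix g u assume "g \<in> C" "u \<in> C" "\<phi> g = \<phi> u"
    then have "pauli_rot h (pauli_rot h' (\<phi> g)) = pauli_rot h (pauli_rot h' (\<phi> u))"
      by simp
    moreover have "pauli_rot h (pauli_rot h' (\<phi> v)) = v" if "v \<in> C" for v
      using that C len len_rot
      by (simp add: \<phi>_def pauli_rot_pauli_rot length_if_subset_pauli_strings)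
    ultimately show "g = u"
      using \<open>g \<in> C\<close> \<open>u \<in> C\<close> by simp
  qed
  then have "inj_on \<phi> {k \<in> C. anticommute k b}"
    by (rule inj_on_subset) blast
  moreover have "\<phi> ` {k \<in> C. anticommute k b} \<subseteq> {k \<in> C. anticommute k b'}"
  proof clarify
    fix k assume "k \<in> C" "anticommute k b"
    then show "\<phi> k \<in> C \<and> anticommute (\<phi> k) b'"
      using closed h h' b b' C anti_\<phi>[of k b]
      by (simp add: \<phi>_def pauli_rot_mem length_if_subset_pauli_strings)
  qed
  ultimately show ?thesis
    using fin by (intro card_inj_on_le) auto
qed

section \<open>Counting anticommuting elements of a centralizer\<close>

definition kcard :: "pauli list set \<Rightarrow> pauli list set \<Rightarrow> pauli list \<Rightarrow> nat" where
  "kcard K T b = card {k \<in> centralizer K T. anticommute k b}"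

lemma finite_centralizer_Collect: "finite K \<Longrightarrow> finite {k \<in> centralizer K T. P k}"
  by (rule finite_subset[of _ K]) (auto simp: centralizer_def)

lemma kcard_pos_iff: "finite K \<Longrightarrow> 0 < kcard K T b \<longleftrightarrow> (\<exists>k\<in>centralizer K T. anticommute k b)"
  unfolding kcard_def by (auto simp: card_gt_0_iff finite_centralizer_Collect)

lemma kcard_insert:
  "kcard K (insert a T) b =
     card ({k \<in> centralizer K T. anticommute k b} - {k \<in> centralizer K T. anticommute k a})"
  unfolding kcard_def centralizer_insert by (rule arg_cong[where f = card]) blast

lemma kcard_insert_le: "finite K \<Longrightarrow> kcard K (insert a T) b \<le> kcard K T b"
  using kcard_insert[of K a T b]
  by (simp add: kcard_def card_mono finite_centralizer_Collect)

fun kcards :: "pauli list set \<Rightarrow> pauli list set \<Rightarrow> pauli list list \<Rightarrow> nat list" where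
  "kcards K T [] = []"
| "kcards K T (b # bs) = kcard K T b # kcards K (insert b T) bs"

lemma length_kcards [simp]: "length (kcards K T bs) = length bs"
  by (induction bs arbitrary: T) auto

lemma kcards_append: "kcards K T (xs @ ys) = kcards K T xs @ kcards K (T \<union> set xs) ys"
  by (induction xs arbitrary: T) auto

lemma nth_kcards:
  "r < length bs \<Longrightarrow> kcards K T bs ! r = kcard K (T \<union> set (take r bs)) (bs ! r)"
proof (induction bs arbitrary: T r)
  case (Cons b bs)
  then show ?case
    by (cases r) (auto simp: insert_commute)
qed simp

lemma kseq_eq_kcards: "kseq K bs = kcards K {} bs"
proof (rule nth_equalityI)
  fix r assume "r < length (kseq K bs)"
  then have "r < length bs"
    by (simp add: kseq_def)
  moreover have "set (take r bs) = (!) bs ` {..<r}"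
    using \<open>r < length bs\<close> nth_image[of r bs] by (simp add: atLeast0LessThan)
  then have "kset K bs r = {k \<in> centralizer K (set (take r bs)). anticommute k (bs ! r)}"
    by (auto simp: kset_def centralizer_def)
  ultimately show "kseq K bs ! r = kcards K {} bs ! r"
    by (simp add: kseq_def kcard_def nth_kcards)
qed (simp add: kseq_def)

lemma successively_iff_nth:
  "successively P xs \<longleftrightarrow> (\<forall>i. Suc i < length xs \<longrightarrow> P (xs ! i) (xs ! Suc i))"
proof (induction P xs rule: successively.induct)
  case (3 P x y xs)
  then show ?case
    by (auto simp: All_less_Suc2 less_Suc_eq_0_disj)
qed auto

lemma good_chain_iff:
  "good_chain xs \<longleftrightarrow>
     (2 \<le> length xs \<longrightarrow> xs ! 1 < xs ! 0) \<and> successively (\<lambda>x y. y < x \<or> y = 0) xs"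
  unfolding good_chain_def successively_iff_nth by auto

abbreviation nonzeros :: "nat list \<Rightarrow> nat list" where
  "nonzeros \<equiv> filter (\<lambda>x. x \<noteq> 0)"

lemma nonzeros_eq_self_iff: "nonzeros xs = xs \<longleftrightarrow> 0 \<notin> set xs"
proof (induction xs)
  case (Cons x xs)
  then show ?case
    using impossible_Cons[of "nonzeros xs" xs x] length_filter_le[of "\<lambda>x. x \<noteq> 0" xs] by auto
qed simp

section \<open>Commuting strings in a Cartan decomposition\<close>

locale connected_abelian_subalgebra =
  fixes n :: nat and K M B :: "pauli list set"
  assumes cartan: "pauli_cartan n K M"
    and B_sub: "B \<subseteq> M"
    and B_comm: "\<forall>a\<in>B. \<forall>b\<in>B. commute a b"
    and B_conn: "\<forall>a\<in>B. \<forall>b\<in>B. same_component (K \<union> M) a b"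
begin

lemma K_sub: "K \<subseteq> pauli_strings n" and M_sub: "M \<subseteq> pauli_strings n"
  using cartan by (simp_all add: pauli_cartan_def)

lemma G_sub: "K \<union> M \<subseteq> pauli_strings n"
  using K_sub M_sub by blast

lemma finite_K: "finite K"
  using K_sub finite_pauli_strings by (rule finite_subset)

lemma finite_B: "finite B"
  by (rule finite_subset[OF B_sub finite_subset[OF M_sub finite_pauli_strings]])

lemma smul_K_K: "a \<in> K \<Longrightarrow> b \<in> K \<Longrightarrow> anticommute a b \<Longrightarrow> smul a b \<in> K"
  and smul_M_M: "a \<in> M \<Longrightarrow> b \<in> M \<Longrightarrow> anticommute a b \<Longrightarrow> smul a b \<in> K"
  and smul_K_M: "a \<in> K \<Longrightarrow> b \<in> M \<Longrightarrow> anticommute a b \<Longrightarrow> smul a b \<in> M"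
  using cartan by (auto simp: pauli_cartan_def)

lemma smul_closed_K: "smul_closed K"
  using smul_K_K by (simp add: smul_closed_def)

lemma smul_closed_G: "smul_closed (K \<union> M)"
  unfolding smul_closed_def
proof (intro ballI impI)
  fix a b assume "a \<in> K \<union> M" "b \<in> K \<union> M" "anticommute a b"
  then show "smul a b \<in> K \<union> M"
    using smul_K_K[of a b] smul_M_M[of a b] smul_K_M[of a b] smul_K_M[of b a]
      smul_commute[of b a] anticommute_sym[of b a]
    by auto
qed

lemma length_B: "b \<in> B \<Longrightarrow> length b = n"
  using B_sub M_sub by (auto intro: length_if_subset_pauli_strings)

lemma B_sub_centralizer: "T \<subseteq> B \<Longrightarrow> B \<subseteq> centralizer (K \<union> M) T"
  unfolding centralizer_def using B_sub B_comm by blast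

lemma common_neighbour_in_G:
  assumes "b \<in> B" "b' \<in> B" "b \<noteq> b'"
  shows "\<exists>h\<in>K \<union> M. anticommute h b \<and> anticommute h b'"
proof -
  have "(frustration_edge (K \<union> M))\<^sup>*\<^sup>* b b'" "b \<in> K \<union> M"
    using B_conn assms by (auto simp: same_component_def)
  then have "b = b' \<or> anticommute b b' \<or> (\<exists>h\<in>K \<union> M. anticommute h b \<and> anticommute h b')"
    by (rule frustration_path_common_neighbour[OF smul_closed_G G_sub])
  then show ?thesis
    using assms B_comm by blast
qed

lemma common_neighbour_centralizer_insert:
  assumes T: "T \<subseteq> B" and a: "a \<in> B" and b: "b \<in> B" and b': "b' \<in> B"
    and h: "h \<in> centralizer (K \<union> M) T" "anticommute h b" "anticommute h b'"
    and g1: "g1 \<in> centralizer (K \<union> M) T" "commute g1 a" "anticommute g1 b"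
    and g2: "g2 \<in> centralizer (K \<union> M) T" "commute g2 a" "anticommute g2 b'"
  shows "\<exists>z\<in>centralizer (K \<union> M) (insert a T). anticommute z b \<and> anticommute z b'"
proof (cases "commute h a \<or> anticommute g1 b' \<or> anticommute g2 b")
  case True
  then show ?thesis
    using h g1 g2 by (auto simp: centralizer_insert)
next
  case False
  let ?C = "centralizer (K \<union> M) T"
  have closed: "smul_closed ?C"
    using smul_closed_centralizer[OF smul_closed_G G_sub] .
  have C: "?C \<subseteq> pauli_strings n"
    using centralizer_subset G_sub by blast
  have BC: "B \<subseteq> ?C"
    using B_sub_centralizer[OF T] .
  have bb': "commute b b'" "commute b' b" and ab: "commute a b" "commute a b'"
    and ba: "commute b a" "commute b' a"
    using B_comm a b b' by blast+
  obtain x where x: "x \<in> ?C"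
    "\<forall>w. commute b w \<longrightarrow> (anticommute x w \<longleftrightarrow> anticommute h w \<noteq> anticommute g1 w)"
    using smul_closed_anticommute_sum[OF closed C _ h(1) g1(1) h(2) g1(3)] BC b by blast
  obtain y where y: "y \<in> ?C"
    "\<forall>w. commute b' w \<longrightarrow> (anticommute y w \<longleftrightarrow> anticommute h w \<noteq> anticommute g2 w)"
    using smul_closed_anticommute_sum[OF closed C _ h(1) g2(1) h(3) g2(3)] BC b' by blast
  have xa: "anticommute x a" and xb: "commute x b" and xb': "anticommute x b'"
    using x(2)[rule_format, of a] x(2)[rule_format, of b] x(2)[rule_format, of b']
      ba bb' not_anticommute_self[of b] False h(2,3) g1(2,3) by auto
  have ya: "anticommute y a" and yb: "anticommute y b" and yb': "commute y b'"
    using y(2)[rule_format, of a] y(2)[rule_format, of b] y(2)[rule_format, of b']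
      ba bb' not_anticommute_self[of b'] False h(2,3) g2(2,3) by auto
  txt \<open>\<open>z\<close> has the anticommutation pattern of \<open>g1\<close> plus \<open>g2\<close> on \<open>B\<close>.\<close>
  obtain z where z: "z \<in> ?C"
    "\<forall>w. commute a w \<longrightarrow> (anticommute z w \<longleftrightarrow> anticommute x w \<noteq> anticommute y w)"
    using smul_closed_anticommute_sum[OF closed C _ x(1) y(1) xa ya] BC a by blast
  have "commute z a" "anticommute z b" "anticommute z b'"
    using z(2)[rule_format, of a] z(2)[rule_format, of b] z(2)[rule_format, of b']
      not_anticommute_self[of a] ab xa ya xb yb xb' yb' by auto
  then show ?thesis
    using z(1) by (auto simp: centralizer_insert)
qed

lemma common_neighbour_centralizer:
  assumes "T \<subseteq> B" and b: "b \<in> B" and b': "b' \<in> B"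
    and "g1 \<in> centralizer (K \<union> M) T" "anticommute g1 b"
    and "g2 \<in> centralizer (K \<union> M) T" "anticommute g2 b'"
  shows "\<exists>h\<in>centralizer (K \<union> M) T. anticommute h b \<and> anticommute h b'"
proof -
  have "finite T"
    using assms(1) finite_B by (rule finite_subset)
  then show ?thesis
    using assms
  proof (induction T arbitrary: g1 g2 rule: finite_induct)
    case empty
    then show ?case
      using common_neighbour_in_G[OF b b'] by (cases "b = b'") auto
  next
    case (insert a T)
    have T: "T \<subseteq> B" and a: "a \<in> B"
      using insert.prems(1) by auto
    have g1: "g1 \<in> centralizer (K \<union> M) T" "commute g1 a"
      and g2: "g2 \<in> centralizer (K \<union> M) T" "commute g2 a"
      using insert.prems(4,6) by (simp_all add: centralizer_insert)
    obtain h where "h \<in> centralizer (K \<union> M) T" "anticommute h b" "anticommute h b'"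
      using insert.IH[OF T b b' g1(1) insert.prems(5) g2(1) insert.prems(7)] by blast
    from common_neighbour_centralizer_insert[OF T a b b' this g1 insert.prems(5) g2 insert.prems(7)]
    show ?case .
  qed
qed

lemma common_neighbour_in_K:
  assumes T: "T \<subseteq> B" and b: "b \<in> B" and b': "b' \<in> B"
    and h: "h \<in> centralizer (K \<union> M) T" "anticommute h b" "anticommute h b'"
  shows "\<exists>k\<in>centralizer K T. anticommute k b \<and> anticommute k b'"
proof (cases "h \<in> K")
  case True
  then show ?thesis
    using h by (auto simp: centralizer_def)
next
  case False
  then have "h \<in> M"
    using h(1) by (auto simp: centralizer_def)
  then have "smul h b \<in> K"
    using smul_M_M b B_sub h(2) by blast
  moreover have "smul h b \<in> centralizer (K \<union> M) T"
    using smul_closed_centralizer[OF smul_closed_G G_sub] h(1,2) B_sub_centralizer[OF T] b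
    by (auto simp: smul_closed_def)
  moreover have "length h = length b"
    using \<open>h \<in> M\<close> b B_sub M_sub by (simp add: length_if_subset_pauli_strings subset_iff)
  ultimately show ?thesis
    using h B_comm b b'
    by (intro bexI[of _ "smul h b"]) (auto simp: centralizer_def anticommute_smul_left not_anticommute_self)
qed

lemma common_neighbour_kcard:
  assumes T: "T \<subseteq> B" and b: "b \<in> B" and b': "b' \<in> B"
    and pos: "0 < kcard K T b" "0 < kcard K T b'"
  shows "\<exists>k\<in>centralizer K T. anticommute k b \<and> anticommute k b'"
proof -
  have sub: "centralizer K T \<subseteq> centralizer (K \<union> M) T"
    by (rule centralizer_mono) blast
  obtain g1 g2 where "g1 \<in> centralizer K T" "anticommute g1 b" "g2 \<in> centralizer K T" "anticommute g2 b'"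
    using pos kcard_pos_iff[OF finite_K] by blast
  then obtain h where "h \<in> centralizer (K \<union> M) T" "anticommute h b" "anticommute h b'"
    using common_neighbour_centralizer[OF T b b'] sub by blast
  then show ?thesis
    by (rule common_neighbour_in_K[OF T b b'])
qed

text \<open>The rotations by \<open>k\<close> and by \<open>k b b'\<close>, both in the centralizer of \<open>T\<close> in \<open>K\<close>,
  carry \<open>b\<close> to \<open>b'\<close>.\<close>
lemma kcard_le_if_common_neighbour:
  assumes T: "T \<subseteq> B" and b: "b \<in> B" and b': "b' \<in> B"
    and k: "k \<in> centralizer K T" "anticommute k b" "anticommute k b'"
  shows "kcard K T b \<le> kcard K T b'"
proof -
  define m where "m = smul k b"
  define k' where "k' = smul m b'"
  have bb': "commute b b'" "commute b' b"
    using B_comm b b' by blast+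
  have len: "length k = n" "length b = n" "length b' = n"
    using k(1) K_sub length_B b b' by (auto simp: centralizer_def length_if_subset_pauli_strings)
  then have len_m: "length m = n"
    by (simp add: m_def)
  have "m \<in> M"
    using smul_K_M k b B_sub by (auto simp: m_def centralizer_def)
  moreover have "anticommute m b'"
    using k(3) bb' len by (simp add: m_def anticommute_smul_left)
  ultimately have "k' \<in> K"
    using smul_M_M b' B_sub by (auto simp: k'_def)
  moreover have "commute k' t" if "t \<in> T" for t
  proof -
    have "commute k t" "commute b t" "commute b' t"
      using that k(1) T B_comm b b' by (auto simp: centralizer_def)
    then show ?thesis
      using len len_m by (simp add: k'_def m_def anticommute_smul_left)
  qed
  ultimately have k': "k' \<in> centralizer K T"
    by (simp add: centralizer_def)
  have "pauli_rot k b = m"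
    using k(2) by (simp add: pauli_rot_def m_def)
  moreover have "anticommute k' m"
    using \<open>anticommute m b'\<close> len len_m
    by (simp add: k'_def anticommute_smul_left not_anticommute_self anticommute_sym[of b'])
  then have "pauli_rot k' m = b'"
    using len len_m smul_smul_cancel[of b' m] by (simp add: pauli_rot_def k'_def smul_commute[of m b'])
  moreover have "centralizer K T \<subseteq> pauli_strings n"
    using centralizer_subset K_sub by blast
  ultimately show ?thesis
    unfolding kcard_def
    by (intro card_anticommute_le_pauli_rot[OF smul_closed_centralizer[OF smul_closed_K K_sub]
          _ finite_subset[OF centralizer_subset finite_K] k(1) k' len(2)]) simp_all
qed

lemma kcard_eq:
  assumes "T \<subseteq> B" "a \<in> B" "b \<in> B" "0 < kcard K T a" "0 < kcard K T b"
  shows "kcard K T a = kcard K T b"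
proof -
  obtain k where "k \<in> centralizer K T" "anticommute k a" "anticommute k b"
    using common_neighbour_kcard[OF assms] by blast
  then show ?thesis
    by (intro order_antisym kcard_le_if_common_neighbour) (use assms in auto)
qed

lemma kcard_insert_less:
  assumes T: "T \<subseteq> B" and a: "a \<in> B" and b: "b \<in> B" and pos: "0 < kcard K T a"
  shows "kcard K (insert a T) b < kcard K T a"
proof (cases "kcard K (insert a T) b = 0")
  case False
  then have "0 < kcard K T b"
    using kcard_insert_le[OF finite_K, of a T b] by linarith
  then obtain k where "k \<in> centralizer K T" "anticommute k a" "anticommute k b"
    using common_neighbour_kcard[OF T a b pos] by blast
  then have "{k \<in> centralizer K T. anticommute k b} - {k \<in> centralizer K T. anticommute k a}
      \<subset> {k \<in> centralizer K T. anticommute k b}"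
    by blast
  then have "kcard K (insert a T) b < kcard K T b"
    unfolding kcard_insert by (simp add: kcard_def psubset_card_mono finite_centralizer_Collect finite_K)
  then show ?thesis
    using kcard_eq[OF T a b pos \<open>0 < kcard K T b\<close>] by simp
qed (use pos in simp)

lemma nonzeros_kcards_swap:
  assumes T: "T \<subseteq> B" and a: "a \<in> B" and b: "b \<in> B"
  shows "nonzeros (kcards K T [a, b]) = nonzeros (kcards K T [b, a])"
proof -
  define A where "A = {k \<in> centralizer K T. anticommute k a}"
  define A' where "A' = {k \<in> centralizer K T. anticommute k b}"
  have kcards: "kcards K T [a, b] = [card A, card (A' - A)]" "kcards K T [b, a] = [card A', card (A - A')]"
    unfolding kcards.simps kcard_insert by (simp_all add: kcard_def A_def A'_def)
  consider "A = {}" | "A' = {}" | "A \<noteq> {}" "A' \<noteq> {}"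
    by blast
  then have "nonzeros [card A, card (A' - A)] = nonzeros [card A', card (A - A')]"
  proof cases
    case 3
    have fin: "finite A" "finite A'"
      by (simp_all add: A_def A'_def finite_centralizer_Collect finite_K)
    then have "card A = card A'"
      using 3 kcard_eq[OF T a b] by (simp add: A_def A'_def kcard_def card_gt_0_iff)
    moreover have "card (A' - A) = card (A - A')"
      using fin \<open>card A = card A'\<close> by (simp add: card_Diff_subset_Int Int_commute)
    ultimately show ?thesis
      by simp
  qed simp_all
  then show ?thesis
    by (simp only: kcards)
qed

lemma nonzeros_kcards_move_to_front:
  assumes "set xs \<subseteq> B" "a \<in> B" "T \<subseteq> B"
  shows "nonzeros (kcards K T (xs @ a # ys)) = nonzeros (kcards K T (a # xs @ ys))"
  using assms
proof (induction xs arbitrary: T)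
  case (Cons x xs)
  then have x: "x \<in> B" and xT: "insert x T \<subseteq> B"
    by auto
  have "nonzeros (kcards K T (x # xs @ a # ys)) = nonzeros (kcards K T ([x, a] @ xs @ ys))"
    using Cons by (simp add: insert_commute)
  also have "\<dots> = nonzeros (kcards K T ([a, x] @ xs @ ys))"
    using nonzeros_kcards_swap[OF \<open>T \<subseteq> B\<close> x \<open>a \<in> B\<close>]
    by (simp only: kcards_append filter_append) (simp add: insert_commute)
  finally show ?case
    by simp
qed simp

lemma nonzeros_kcards_mset_eq:
  assumes "set bs \<subseteq> B" "T \<subseteq> B" "mset bs' = mset bs"
  shows "nonzeros (kcards K T bs') = nonzeros (kcards K T bs)"
  using assms
proof (induction bs arbitrary: bs' T)
  case (Cons a bs)
  have "set bs' = set (a # bs)"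
    using Cons.prems(3) by (rule mset_eq_setD)
  then obtain xs ys where bs': "bs' = xs @ a # ys"
    by (metis list.set_intros(1) split_list)
  have "set xs \<subseteq> B"
    using Cons.prems(1) \<open>set bs' = set (a # bs)\<close> bs' by auto
  then have "nonzeros (kcards K T bs') = nonzeros (kcards K T (a # xs @ ys))"
    using Cons.prems bs' nonzeros_kcards_move_to_front[of xs a T ys] by simp
  also have "\<dots> = nonzeros (kcards K T (a # bs))"
    using Cons.IH[of "insert a T" "xs @ ys"] Cons.prems bs' by simp
  finally show ?case
    by simp
qed simp

lemma kcards_mset_eq_if_nonzero:
  assumes "set bs \<subseteq> B" "T \<subseteq> B" "mset bs' = mset bs" and nonzero: "0 \<notin> set (kcards K T bs)"
  shows "kcards K T bs' = kcards K T bs"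
proof -
  have "nonzeros (kcards K T bs) = kcards K T bs"
    using nonzero nonzeros_eq_self_iff by blast
  then have eq: "nonzeros (kcards K T bs') = kcards K T bs"
    using nonzeros_kcards_mset_eq[OF assms(1-3)] by simp
  moreover have "length bs' = length bs"
    using assms(3) by (metis size_mset)
  ultimately have "length (nonzeros (kcards K T bs')) = length (kcards K T bs')"
    by simp
  then have "0 \<notin> set (kcards K T bs')"
    using length_filter_less[of 0 "kcards K T bs'" "\<lambda>x. x \<noteq> 0"] by auto
  then have "nonzeros (kcards K T bs') = kcards K T bs'"
    using nonzeros_eq_self_iff by blast
  then show ?thesis
    using eq by simp
qed

lemma kseq_eq_if_prefix_perm:
  assumes "set bs \<subseteq> B" and nonzero: "\<forall>i<r. kseq K bs ! i \<noteq> 0"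
    and prefix: "mset (take r bs') = mset (take r bs)" and suffix: "drop r bs' = drop r bs"
  shows "kseq K bs' = kseq K bs"
proof -
  have split: "kseq K xs = kcards K {} (take r xs) @ kcards K (set (take r xs)) (drop r xs)" for xs
    using kcards_append[of K "{}" "take r xs" "drop r xs"] by (simp add: kseq_eq_kcards)
  have "kcards K {} (take r bs) ! i \<noteq> 0" if "i < length (take r bs)" for i
    using nonzero[rule_format, of i] split[of bs] that by (simp add: nth_append)
  then have "0 \<notin> set (kcards K {} (take r bs))"
    by (auto simp: in_set_conv_nth)
  moreover have "set (take r bs) \<subseteq> B"
    using assms(1) set_take_subset[of r bs] by blast
  ultimately have "kcards K {} (take r bs') = kcards K {} (take r bs)"
    using prefix by (intro kcards_mset_eq_if_nonzero) auto
  moreover have "set (take r bs') = set (take r bs)"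
    using prefix by (rule mset_eq_setD)
  ultimately show ?thesis
    using split[of bs] split[of bs'] suffix by simp
qed

lemma exists_kcards_successively:
  assumes "finite R" "R \<subseteq> B" "T \<subseteq> B"
  shows "\<exists>bs. distinct bs \<and> set bs = R \<and> successively (\<lambda>x y. y < x \<or> y = 0) (kcards K T bs)"
  using assms
proof (induction R arbitrary: T rule: finite_psubset_induct)
  case (psubset R)
  show ?case
  proof (cases "R = {}")
    case False
    then obtain a where a: "a \<in> R" and choice: "0 < kcard K T a \<or> (\<forall>b\<in>R. kcard K T b = 0)"
      by (cases "\<exists>a\<in>R. 0 < kcard K T a") auto
    then obtain bs where bs: "distinct bs" "set bs = R - {a}"
      "successively (\<lambda>x y. y < x \<or> y = 0) (kcards K (insert a T) bs)"
      using psubset.IH[of "R - {a}" "insert a T"] psubset.prems by blast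
    have step: "kcard K (insert a T) b < kcard K T a \<or> kcard K (insert a T) b = 0" if "b \<in> R" for b
      using choice kcard_insert_less[of T a b] kcard_insert_le[OF finite_K, of a T b] that a psubset.prems
      by auto
    have "hd bs \<in> R" if "bs \<noteq> []"
      using bs(2) hd_in_set[OF that] by blast
    then have "successively (\<lambda>x y. y < x \<or> y = 0) (kcards K T (a # bs))"
      using bs(3) step by (cases bs) (auto simp: successively_Cons)
    then show ?thesis
      using a bs by (intro exI[of _ "a # bs"]) auto
  qed simp
qed

lemma kseq_second_less_first:
  assumes "distinct bs" "set bs \<subseteq> B" "2 \<le> length bs"
  shows "kseq K bs ! 1 < kseq K bs ! 0"
proof -
  obtain b0 b1 bs' where bs: "bs = b0 # b1 # bs'"
    using assms(3) by (auto simp: numeral_2_eq_2 Suc_le_length_iff)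
  then have b: "b0 \<in> B" "b1 \<in> B" "b0 \<noteq> b1"
    using assms(1,2) by auto
  obtain h where "h \<in> K \<union> M" "anticommute h b0" "anticommute h b1"
    using common_neighbour_in_G[OF b] by blast
  then obtain k where "k \<in> centralizer K {}" "anticommute k b0"
    using common_neighbour_in_K[of "{}" b0 b1 h] b by auto
  then have "0 < kcard K {} b0"
    using kcard_pos_iff[OF finite_K] by blast
  then show ?thesis
    using kcard_insert_less[of "{}" b0 b1] b by (simp add: bs kseq_eq_kcards)
qed

end

theorem theorem3:
  fixes n :: nat and K M B :: "pauli list set"
  assumes cartan: "pauli_cartan n K M"
    and B_sub: "B \<subseteq> M"
    and B_comm: "\<forall>a\<in>B. \<forall>b\<in>B. commute a b"
    and B_conn: "\<forall>a\<in>B. \<forall>b\<in>B. same_component (K \<union> M) a b"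
  shows "\<exists>bs. distinct bs \<and> set bs = B \<and>
           good_chain (kseq K bs) \<and>
           (\<forall>r \<le> length bs. (\<forall>i<r. kseq K bs ! i \<noteq> 0) \<longrightarrow>
              (\<forall>bs'. mset (take r bs') = mset (take r bs) \<and> drop r bs' = drop r bs \<longrightarrow>
                 good_chain (kseq K bs'))) \<and>
           (\<forall>bs'. mset bs' = mset bs \<longrightarrow>
              filter (\<lambda>x. x \<noteq> 0) (kseq K bs') = filter (\<lambda>x. x \<noteq> 0) (kseq K bs))"
proof -
  interpret connected_abelian_subalgebra n K M B
    using assms by unfold_locales
  obtain bs where bs: "distinct bs" "set bs = B"
    "successively (\<lambda>x y. y < x \<or> y = 0) (kseq K bs)"
    using exists_kcards_successively[OF finite_B order_refl empty_subsetI]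
    by (auto simp: kseq_eq_kcards)
  have good: "good_chain (kseq K bs)"
    unfolding good_chain_iff
    using bs kseq_second_less_first[OF bs(1)] by (simp add: kseq_eq_kcards)
  show ?thesis
  proof (intro exI[of _ bs] conjI allI impI)
    fix r bs'
    assume "\<forall>i<r. kseq K bs ! i \<noteq> 0" "mset (take r bs') = mset (take r bs) \<and> drop r bs' = drop r bs"
    then have "kseq K bs' = kseq K bs"
      using kseq_eq_if_prefix_perm bs(2) by blast
    then show "good_chain (kseq K bs')"
      using good by simp
  next
    fix bs' :: "pauli list list"
    assume "mset bs' = mset bs"
    then show "nonzeros (kseq K bs') = nonzeros (kseq K bs)"
      using nonzeros_kcards_mset_eq[of bs "{}" bs'] bs(2) by (simp add: kseq_eq_kcards)
  qed (use bs good in auto)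
qed

end
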